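(* Let $G$ be a graph whose edges are coloured with colours $1$ and $2$, and let $A_1,A_2,B$ be pairwise disjoint subsets of $V(G)$. For $i=1,2$, suppose every vertex of $A_i$ is adjacent to every vertex of $B$ and all these edges between $A_i$ and $B$ have colour $i$; let $P_{A_i}$ be a non-empty path of colour $i$ in $G[A_i]$, and let $P_B^i$ be a (possibly empty) path of colour $i$ in $G[B]$. Suppose that (a) the vertex sets of $P_B^1$ and $P_B^2$ partition $B$, and (b) $|A_1\setminus V(P_{A_1})|+|A_2\setminus V(P_{A_2})|+2\le |B|$. Then $A_1\cup A_2\cup B$ can be partitioned into two monochromatic cycles, one of colour $1$ and one of colour $2$.
   Context: A path or cycle is of colour $i$ (monochromatic) if all its edges have colour $i$; a single vertex is a path of any colour, and a single vertex, a single edge, and the empty set are also considered to be cycles. *)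

theory Defs
  imports Main
begin

definition simple_graph :: "'a set \<Rightarrow> 'a set set \<Rightarrow> bool" where
  "simple_graph V E \<longleftrightarrow> finite V \<and> (\<forall>e\<in>E. e \<subseteq> V \<and> card e = 2)"

definition two_edge_colouring :: "'a set set \<Rightarrow> ('a set \<Rightarrow> nat) \<Rightarrow> bool" where
  "two_edge_colouring E c \<longleftrightarrow> (\<forall>e\<in>E. c e \<in> {1, 2})"

text \<open>A path of colour i: a list of distinct vertices, consecutive ones joined by an
  edge of colour i. The empty list is the empty path; a single vertex is a path of any colour.\<close>

definition mono_path :: "'a set set \<Rightarrow> ('a set \<Rightarrow> nat) \<Rightarrow> nat \<Rightarrow> 'a list \<Rightarrow> bool" where
  "mono_path E c i xs \<longleftrightarrow> distinct xs \<and>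
     (\<forall>j. Suc j < length xs \<longrightarrow> {xs ! j, xs ! Suc j} \<in> E \<and> c {xs ! j, xs ! Suc j} = i)"

text \<open>The empty set, a single vertex and
  a single edge (of colour i) are cycles.\<close>

definition mono_cycle :: "'a set set \<Rightarrow> ('a set \<Rightarrow> nat) \<Rightarrow> nat \<Rightarrow> 'a list \<Rightarrow> bool" where
  "mono_cycle E c i xs \<longleftrightarrow> mono_path E c i xs \<and>
     (3 \<le> length xs \<longrightarrow> {last xs, hd xs} \<in> E \<and> c {last xs, hd xs} = i)"

end

theory Submission
  imports Defs
begin

text \<open>For colour \<open>i\<close>, list the vertices of \<open>A\<^sub>i\<close> off \<open>P\<^sub>A\<^sub>i\<close> as \<open>R\<^sub>i\<close>. The cycle of colour \<open>i\<close> runs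
  along \<open>P\<^sub>A\<^sub>i\<close>, then alternates between "spacer" vertices of \<open>B\<close> and the vertices of \<open>R\<^sub>i\<close>,
  then follows a non-empty colour-\<open>i\<close> path \<open>T\<^sub>i\<close> inside \<open>B\<close> and closes back to the start of
  \<open>P\<^sub>A\<^sub>i\<close>; every step between \<open>A\<^sub>i\<close> and \<open>B\<close> uses the complete colour-\<open>i\<close> join. Spacers
  need no edges among themselves, so it suffices to cut from \<open>P\<^sub>B\<^sup>1\<close> and \<open>P\<^sub>B\<^sup>2\<close> disjoint
  non-empty paths \<open>T\<^sub>1\<close>, \<open>T\<^sub>2\<close> of colours 1 and 2 covering exactly \<open>|B| - |R\<^sub>1| - |R\<^sub>2| \<ge> 2\<close>
  vertices, and to share out the rest of \<open>B\<close> as spacers.\<close>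

lemma mono_path_iff_successively:
  "mono_path E c i xs \<longleftrightarrow> distinct xs \<and> successively (\<lambda>x y. {x, y} \<in> E \<and> c {x, y} = i) xs"
  by (auto simp: mono_path_def successively_conv_nth)

lemma mono_path_singleton [simp]: "mono_path E c i [x]"
  by (simp add: mono_path_iff_successively)

lemma mono_path_Cons:
  "mono_path E c i (x # xs) \<longleftrightarrow> x \<notin> set xs \<and> mono_path E c i xs \<and>
     (xs \<noteq> [] \<longrightarrow> {x, hd xs} \<in> E \<and> c {x, hd xs} = i)"
  by (auto simp: mono_path_iff_successively successively_Cons)

lemma mono_path_append:
  "mono_path E c i (xs @ ys) \<longleftrightarrow> mono_path E c i xs \<and> mono_path E c i ys \<and>
     set xs \<inter> set ys = {} \<and>
     (xs \<noteq> [] \<and> ys \<noteq> [] \<longrightarrow> {last xs, hd ys} \<in> E \<and> c {last xs, hd ys} = i)"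
  by (auto simp: mono_path_iff_successively successively_append_iff)

lemma mono_path_take: "mono_path E c i xs \<Longrightarrow> mono_path E c i (take k xs)"
  by (metis append_take_drop_id mono_path_append)

fun interleave :: "'a list \<Rightarrow> 'a list \<Rightarrow> 'a list" where
  "interleave (x # xs) (y # ys) = x # y # interleave xs ys"
| "interleave _ _ = []"

lemma set_interleave:
  "length xs = length ys \<Longrightarrow> set (interleave xs ys) = set xs \<union> set ys"
  by (induction xs ys rule: list_induct2) auto

lemma mono_path_interleave_append:
  assumes join: "\<forall>a\<in>A. \<forall>b\<in>B. {a, b} \<in> E \<and> c {a, b} = i" and "A \<inter> B = {}"
    and "length S = length R" and "distinct S" "set S \<subseteq> B" and "distinct R" "set R \<subseteq> A"
    and T: "mono_path E c i T" "T \<noteq> []" "set T \<subseteq> B" and "set S \<inter> set T = {}"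
  shows "mono_path E c i (interleave S R @ T) \<and> hd (interleave S R @ T) \<in> B"
  using assms(3-7,11)
proof (induction S R rule: list_induct2)
  case Nil
  then show ?case using T by (cases T) auto
next
  case (Cons s S r R)
  then show ?case
    using T join \<open>A \<inter> B = {}\<close> by (auto simp: mono_path_Cons set_interleave insert_commute)
qed

lemma mono_cycle_through_join:
  assumes join: "\<forall>a\<in>A. \<forall>b\<in>B. {a, b} \<in> E \<and> c {a, b} = i" and AB: "A \<inter> B = {}"
    and P: "mono_path E c i P" "P \<noteq> []" "set P \<subseteq> A"
    and R: "distinct R" "set R \<subseteq> A" "set R \<inter> set P = {}"
    and S: "length S = length R" "distinct S" "set S \<subseteq> B"
    and T: "mono_path E c i T" "T \<noteq> []" "set T \<subseteq> B" "set S \<inter> set T = {}"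
  shows "mono_cycle E c i (P @ interleave S R @ T)"
proof -
  have tail: "mono_path E c i (interleave S R @ T)" "hd (interleave S R @ T) \<in> B"
    using mono_path_interleave_append[OF join AB S(1,2,3) R(1,2) T] by auto
  have "set P \<inter> set (interleave S R @ T) = {}"
    using AB P(3) R(3) S T(3) by (auto simp: set_interleave)
  moreover have "{last P, hd (interleave S R @ T)} \<in> E \<and> c {last P, hd (interleave S R @ T)} = i"
    using join P(2,3) tail(2) last_in_set by blast
  ultimately have "mono_path E c i (P @ interleave S R @ T)"
    using P(1) tail(1) T(2) by (simp only: mono_path_append) simp
  moreover have "{last T, hd P} \<in> E \<and> c {last T, hd P} = i"
    using join P(2,3) T(2,3) by (metis hd_in_set insert_commute last_in_set subsetD)
  ultimately show ?thesis
    using P(2) T(2) by (simp add: mono_cycle_def)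
qed

lemma nth_notin_set_take:
  "distinct xs \<Longrightarrow> k < length xs \<Longrightarrow> xs ! k \<notin> set (take k xs)"
  by (metis distinct_take distinct_append not_distinct_conv_prefix take_Suc_conv_app_nth)

lemma obtain_disjoint_mono_paths:
  assumes P1: "mono_path E c i P1" and P2: "mono_path E c j P2" and P12: "set P1 \<inter> set P2 = {}"
    and n: "2 \<le> n" "n \<le> length P1 + length P2"
  obtains T1 T2 where "mono_path E c i T1" "T1 \<noteq> []" "mono_path E c j T2" "T2 \<noteq> []"
    "set T1 \<union> set T2 \<subseteq> set P1 \<union> set P2" "set T1 \<inter> set T2 = {}" "length T1 + length T2 = n"
proof -
  consider "P2 = []" | "P1 = []" | "P1 \<noteq> []" "P2 \<noteq> []" by blast
  then show thesis
  proof cases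
    case 1
    have "P1 ! (n - 1) \<notin> set (take (n - 1) P1)" "P1 ! (n - 1) \<in> set P1"
      using P1 n 1 by (auto simp: mono_path_def nth_notin_set_take)
    with 1 n show thesis
      by (intro that[of "take (n - 1) P1" "[P1 ! (n - 1)]"])
        (auto simp: P1 mono_path_take dest: in_set_takeD)
  next
    case 2
    have "P2 ! (n - 1) \<notin> set (take (n - 1) P2)" "P2 ! (n - 1) \<in> set P2"
      using P2 n 2 by (auto simp: mono_path_def nth_notin_set_take)
    with 2 n show thesis
      by (intro that[of "[P2 ! (n - 1)]" "take (n - 1) P2"])
        (auto simp: P2 mono_path_take dest: in_set_takeD)
  next
    case 3
    define k where "k = min (length P1) (n - 1)"
    have "0 < k" "k \<le> length P1" "0 < n - k" "n - k \<le> length P2"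
      using 3 n by (auto simp: k_def min_def Suc_le_eq)
    with P12 show thesis
      by (intro that[of "take k P1" "take (n - k) P2"])
        (auto simp: P1 P2 mono_path_take dest: in_set_takeD)
  qed
qed

lemma obtain_distinct_lists_partition:
  assumes "finite X" "card X = m + k"
  obtains xs ys where "distinct xs" "length xs = m" "distinct ys" "length ys = k"
    "set xs \<inter> set ys = {}" "set xs \<union> set ys = X"
proof -
  obtain zs where zs: "set zs = X" "distinct zs"
    using finite_distinct_list[OF assms(1)] by blast
  with assms(2) have "length zs = m + k" by (metis distinct_card)
  with zs show thesis
    by (intro that[of "take m zs" "drop m zs"])
      (auto simp: set_take_disj_set_drop_if_distinct simp flip: set_append)
qed

theorem lemma3p4:
  fixes V :: "'a set" and E :: "'a set set" and c :: "'a set \<Rightarrow> nat"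
    and A1 A2 B :: "'a set" and PA1 PA2 PB1 PB2 :: "'a list"
  assumes G: "simple_graph V E" and col: "two_edge_colouring E c"
    and sub: "A1 \<subseteq> V" "A2 \<subseteq> V" "B \<subseteq> V"
    and disj: "A1 \<inter> A2 = {}" "A1 \<inter> B = {}" "A2 \<inter> B = {}"
    and join1: "\<forall>a\<in>A1. \<forall>b\<in>B. {a, b} \<in> E \<and> c {a, b} = 1"
    and join2: "\<forall>a\<in>A2. \<forall>b\<in>B. {a, b} \<in> E \<and> c {a, b} = 2"
    and PA1: "mono_path E c 1 PA1" "set PA1 \<subseteq> A1" "PA1 \<noteq> []"
    and PA2: "mono_path E c 2 PA2" "set PA2 \<subseteq> A2" "PA2 \<noteq> []"
    and PB1: "mono_path E c 1 PB1" "set PB1 \<subseteq> B"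
    and PB2: "mono_path E c 2 PB2" "set PB2 \<subseteq> B"
    and a: "set PB1 \<inter> set PB2 = {}" "set PB1 \<union> set PB2 = B"
    and b: "card (A1 - set PA1) + card (A2 - set PA2) + 2 \<le> card B"
  shows "\<exists>C1 C2. mono_cycle E c 1 C1 \<and> mono_cycle E c 2 C2 \<and>
           set C1 \<inter> set C2 = {} \<and> set C1 \<union> set C2 = A1 \<union> A2 \<union> B"
proof -
  have fin: "finite A1" "finite A2" "finite B"
    using G sub finite_subset by (auto simp: simple_graph_def)
  obtain R1 R2 where R1: "distinct R1" "set R1 = A1 - set PA1"
    and R2: "distinct R2" "set R2 = A2 - set PA2"
    using fin finite_distinct_list by (metis finite_Diff)
  have "card B = length PB1 + length PB2"
    using a PB1(1) PB2(1) by (metis card_Un_disjoint distinct_card finite_set mono_path_def)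
  with b R1 R2 have lens: "2 \<le> card B - (length R1 + length R2)"
    "card B - (length R1 + length R2) \<le> length PB1 + length PB2"
    by (auto simp flip: distinct_card)
  obtain T1 T2 where T: "mono_path E c 1 T1" "T1 \<noteq> []" "mono_path E c 2 T2" "T2 \<noteq> []"
    "set T1 \<union> set T2 \<subseteq> B" "set T1 \<inter> set T2 = {}"
    "length T1 + length T2 = card B - (length R1 + length R2)"
    using obtain_disjoint_mono_paths[OF PB1(1) PB2(1) a(1) lens] a(2) by metis
  have "card (set T1 \<union> set T2) = length T1 + length T2"
    using T by (simp add: card_Un_disjoint distinct_card mono_path_def)
  with T(5,7) lens(1) fin(3) have card_spacers: "card (B - (set T1 \<union> set T2)) = length R1 + length R2"
    by (simp add: card_Diff_subset)
  obtain S1 S2 where S: "distinct S1" "length S1 = length R1" "distinct S2" "length S2 = length R2"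
    "set S1 \<inter> set S2 = {}" "set S1 \<union> set S2 = B - (set T1 \<union> set T2)"
    by (rule obtain_distinct_lists_partition[OF finite_Diff[OF fin(3)] card_spacers])
  have "mono_cycle E c 1 (PA1 @ interleave S1 R1 @ T1)"
    by (rule mono_cycle_through_join[OF join1 disj(2) PA1(1,3,2)]) (use R1 S T in auto)
  moreover have "mono_cycle E c 2 (PA2 @ interleave S2 R2 @ T2)"
    by (rule mono_cycle_through_join[OF join2 disj(3) PA2(1,3,2)]) (use R2 S T in auto)
  moreover have "set (PA1 @ interleave S1 R1 @ T1) = A1 \<union> set S1 \<union> set T1"
    "set (PA2 @ interleave S2 R2 @ T2) = A2 \<union> set S2 \<union> set T2"
    using R1 R2 S PA1(2) PA2(2) by (auto simp: set_interleave)
  moreover have "(A1 \<union> set S1 \<union> set T1) \<inter> (A2 \<union> set S2 \<union> set T2) = {}"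
    using S(5,6) T(5,6) disj by blast
  moreover have "(A1 \<union> set S1 \<union> set T1) \<union> (A2 \<union> set S2 \<union> set T2) = A1 \<union> A2 \<union> B"
    using S(6) T(5) by blast
  ultimately show ?thesis
    by metis
qed

end
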